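(* Let $d\ge1$, $\boldsymbol k\in\mathbb Z^d$, $x>0$, $\boldsymbol y\in\mathbb R_+^d$, $\phi\in\mathbb R$. Then $$J_{\boldsymbol k}(\boldsymbol y;2\pi x,\phi)=\frac1{2\pi}\sum_{m\in\mathbb Z}e^{im\phi}j_{(0,m)}(xy_1\cdots y_d)\prod_{l=1}^dj_{(0,k_l+m)}(xy_l^{-1}),$$ the series being absolutely convergent.
   Context: $j_{(0,m)}(x)=2\pi i^mJ_m(4\pi x)$ with $J_m$ the classical $J$-Bessel function. $\Theta_{\boldsymbol k}(\boldsymbol\theta,\boldsymbol y;x,\phi)=2xy_1\cdots y_d\cos(\sum_{l=1}^d\theta_l+\phi)+\sum_{l=1}^d(k_l\theta_l+2xy_l^{-1}\cos\theta_l)$ and $J_{\boldsymbol k}(\boldsymbol y;x,\phi)=\int_{[0,2\pi]^d}e^{i\Theta_{\boldsymbol k}(\boldsymbol\theta,\boldsymbol y;x,\phi)}d\boldsymbol\theta$. *)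

theory Defs
  imports "HOL-Analysis.Analysis"
begin

definition besselJ_nat :: "nat \<Rightarrow> real \<Rightarrow> real" where
  "besselJ_nat n z = (\<Sum>k. (-1)^k / (fact k * fact (k + n)) * (z / 2) ^ (2 * k + n))"

definition besselJ :: "int \<Rightarrow> real \<Rightarrow> real" where
  "besselJ m z = (if m \<ge> 0 then besselJ_nat (nat m) z
                  else (-1) ^ nat (- m) * besselJ_nat (nat (- m)) z)"

definition jfun0 :: "int \<Rightarrow> real \<Rightarrow> complex" where
  "jfun0 m x = 2 * complex_of_real pi * (\<i> powi m) * complex_of_real (besselJ m (4 * pi * x))"

definition Theta :: "('n::finite \<Rightarrow> int) \<Rightarrow> real^'n \<Rightarrow> ('n \<Rightarrow> real) \<Rightarrow> real \<Rightarrow> real \<Rightarrow> real" where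
  "Theta k \<theta> y x \<phi> =
     2 * x * (\<Prod>l\<in>UNIV. y l) * cos ((\<Sum>l\<in>UNIV. \<theta> $ l) + \<phi>)
     + (\<Sum>l\<in>UNIV. of_int (k l) * \<theta> $ l + 2 * x / y l * cos (\<theta> $ l))"

definition Jk :: "('n::finite \<Rightarrow> int) \<Rightarrow> ('n \<Rightarrow> real) \<Rightarrow> real \<Rightarrow> real \<Rightarrow> complex" where
  "Jk k y x \<phi> = integral (cbox (0::real^'n) (\<chi> l. 2 * pi))
                   (\<lambda>\<theta>. exp (\<i> * complex_of_real (Theta k \<theta> y x \<phi>)))"

end

theory Submission
  imports Defs
begin

(* The Jacobi-Anger expansion exp (i z cos s) = sum_n i^n J_n(z) exp (i n s) comes from multiplying
   the exponential series of exp (z w / 2) and exp (- z / (2 w)) and grouping the terms by the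
   difference of the two exponents, with w = i exp (i s).  Applied to the factor
   exp (2 i x y_1 ... y_d cos (theta_1 + ... + theta_d + phi)) of the integrand of J_k it converges
   uniformly in theta, because sum_n |J_n(z)| is finite, so it can be integrated term by term.  Each
   term factorises over the coordinates theta_l, and every one-dimensional factor is Bessel's
   integral of exp (i p t + i z cos t) over [0, 2 pi], which equals 2 pi i^p J_p(z) by the same
   expansion and the orthogonality of the exp (i n t). *)

lemma besselJ_nat_series_abs_summable:
  "summable (\<lambda>k. norm ((-1)^k / (fact k * fact (k + n)) * (z / 2) ^ (2 * k + n) :: real))"
proof (rule summable_comparison_test')
  show "summable (\<lambda>k. \<bar>z/2\<bar>^n * (inverse (fact k) * (\<bar>z/2\<bar>^2)^k))"
    by (intro summable_mult summable_exp)
  fix k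
  have "norm (norm ((-1)^k / (fact k * fact (k + n)) * (z / 2) ^ (2 * k + n) :: real))
      = \<bar>z/2\<bar>^(2 * k + n) / (fact k * fact (k + n))"
    by (simp add: abs_mult power_abs)
  also have "\<dots> = \<bar>z/2\<bar>^n * (\<bar>z/2\<bar>^2)^k / (fact k * fact (k + n))"
    by (simp only: power_add power_mult mult.commute[of "_ ^ n"])
  also have "\<dots> \<le> \<bar>z/2\<bar>^n * (\<bar>z/2\<bar>^2)^k / fact k"
    by (intro divide_left_mono) (auto simp: fact_ge_1)
  also have "\<dots> = \<bar>z/2\<bar>^n * (inverse (fact k) * (\<bar>z/2\<bar>^2)^k)"
    by (simp only: divide_inverse mult.assoc mult.commute[of "(_ ^ 2) ^ k"])
  finally show "norm (norm ((-1)^k / (fact k * fact (k + n)) * (z / 2) ^ (2 * k + n) :: real))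
      \<le> \<bar>z/2\<bar>^n * (inverse (fact k) * (\<bar>z/2\<bar>^2)^k)" .
qed

lemma sums_besselJ_nat:
  "(\<lambda>k. (-1)^k / (fact k * fact (k + n)) * (z / 2) ^ (2 * k + n)) sums besselJ_nat n z"
  unfolding besselJ_nat_def
  by (rule summable_sums[OF summable_norm_cancel[OF besselJ_nat_series_abs_summable]])

lemma besselJ_nat_minus: "besselJ_nat m (-z) = (-1)^m * besselJ_nat m z"
proof -
  have summand: "(-1)^k / (fact k * fact (k + m)) * (-z / 2) ^ (2 * k + m)
      = (-1)^m * ((-1)^k / (fact k * fact (k + m)) * (z / 2) ^ (2 * k + m))" for k
    using power_minus[of "z/2" "2 * k + m"] by (simp add: power_add power_mult)
  have "(\<lambda>k. (-1)^k / (fact k * fact (k + m)) * (-z / 2) ^ (2 * k + m))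
      sums ((-1)^m * besselJ_nat m z)"
    unfolding summand by (intro sums_mult sums_besselJ_nat)
  then show ?thesis
    using sums_besselJ_nat[of m "-z"] by (simp add: sums_unique2)
qed

lemma besselJ_neg_order: "besselJ (- n) z = (-1) powi n * besselJ n z"
  by (cases "n \<ge> 0") (auto simp: besselJ_def power_int_def)

lemma besselJ_neg_order_times_i_powi:
  "of_real (besselJ (- n) z) * \<i> powi (- n) = of_real (besselJ n z) * \<i> powi n"
proof -
  have "\<i> powi (- n) = (- \<i>) powi n"
    by (simp add: power_int_minus flip: power_int_inverse)
  then have "(-1) powi n * \<i> powi (- n) = \<i> powi n"
    by (simp flip: power_int_mult_distrib)
  then show ?thesis
    by (simp add: besselJ_neg_order mult_ac)
qed

lemma exp_series_abs_summable_on: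
  fixes x :: "'a::{real_normed_field, banach}"
  shows "(\<lambda>n. norm (x^n /\<^sub>R fact n)) summable_on UNIV"
  using summable_exp_generic[of "norm x"]
  by (intro summable_nonneg_imp_summable_on) (auto simp: norm_power divide_inverse mult_ac)

lemma has_sum_exp_series:
  fixes x :: "'a::{real_normed_field, banach}"
  shows "((\<lambda>n. x^n /\<^sub>R fact n) has_sum exp x) UNIV"
  using summable_exp_generic[of "norm x"] exp_converges[of x]
  by (intro norm_summable_imp_has_sum) (auto simp: norm_power divide_inverse mult_ac)

lemma has_sum_mult_abs_summable:
  fixes u :: "'a \<Rightarrow> 'c::{real_normed_field, banach}" and v :: "'b \<Rightarrow> 'c"
  assumes "(u has_sum U) UNIV" "(v has_sum V) UNIV"
    and "(\<lambda>a. norm (u a)) summable_on UNIV" "(\<lambda>b. norm (v b)) summable_on UNIV"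
  shows "((\<lambda>(a, b). u a * v b) has_sum U * V) UNIV"
proof -
  define NV where "NV = infsum (\<lambda>b. norm (v b)) UNIV"
  have "NV \<ge> 0"
    unfolding NV_def by (rule infsum_nonneg) simp
  then have "(\<lambda>a. norm (infsum (\<lambda>b. norm (u a * v b)) UNIV)) = (\<lambda>a. norm (u a) * NV)"
    by (simp add: NV_def norm_mult infsum_cmult_right')
  moreover have "(\<lambda>b. norm (u a * v b)) summable_on UNIV" for a
    using summable_on_cmult_right[OF assms(4)] by (simp add: norm_mult)
  ultimately have "(\<lambda>p. norm ((\<lambda>(a, b). u a * v b) p)) summable_on UNIV \<times> UNIV"
    using summable_on_cmult_left[OF assms(3)]
    by (intro Infinite_Sum.abs_summable_on_Sigma_iff[THEN iffD2]) auto
  then have "(\<lambda>(a, b). u a * v b) summable_on UNIV \<times> UNIV"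
    by (rule abs_summable_summable)
  then have "((\<lambda>(a, b). u a * v b) has_sum U * V) (UNIV \<times> UNIV)"
  proof (rule has_sum_SigmaI[rotated 2])
    show "((\<lambda>b. (\<lambda>(a, b). u a * v b) (a, b)) has_sum u a * V) UNIV" for a
      using has_sum_cmult_right[OF assms(2)] by simp
    show "((\<lambda>a. u a * V) has_sum U * V) UNIV"
      by (rule has_sum_cmult_left[OF assms(1)])
  qed
  then show ?thesis
    by simp
qed

lemma exp_series_product_term:
  fixes c w :: complex
  assumes "w \<noteq> 0"
  shows "((c * w)^(b+m) /\<^sub>R fact (b+m)) * ((- c * inverse w)^b /\<^sub>R fact b)
       = (-1)^b * c^(2 * b + m) * w^m / (fact b * fact (b + m))"
proof -
  have "- c * inverse w * w = - c"
    using assms by simp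
  then have "(- c * inverse w)^b * w^b = (-1)^b * c^b"
    by (metis power_mult_distrib power_minus)
  moreover have "(c * w)^(b+m) * (- c * inverse w)^b = c^(b+m) * w^m * ((- c * inverse w)^b * w^b)"
    by (simp only: power_mult_distrib power_add mult_ac)
  moreover have "c^(2 * b + m) = c^b * c^(b+m)"
    by (simp add: mult_2 add.assoc flip: power_add)
  ultimately have "(c * w)^(b+m) * (- c * inverse w)^b = (-1)^b * c^(2 * b + m) * w^m"
    by (simp only: mult_ac)
  then show ?thesis
    by (simp add: scaleR_conv_of_real divide_inverse mult.commute mult.left_commute)
qed

lemma has_sum_exp_series_product_diagonal:
  fixes z :: real and w :: complex
  assumes "w \<noteq> 0"
  shows "((\<lambda>b. ((of_real (z/2) * w)^(b+m) /\<^sub>R fact (b+m)) * ((- of_real (z/2) * inverse w)^b /\<^sub>R fact b))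
          has_sum of_real (besselJ_nat m z) * w^m) UNIV"
proof -
  define T where "T b = (-1)^b / (fact b * fact (b + m)) * (z / 2) ^ (2 * b + m)" for b
  have "((\<lambda>b. of_real (T b) * w^m) has_sum of_real (besselJ_nat m z) * w^m) UNIV"
  proof (rule norm_summable_imp_has_sum)
    show "summable (\<lambda>b. norm (of_real (T b) * w^m))"
      unfolding norm_mult norm_of_real
      by (intro summable_mult2)
        (use besselJ_nat_series_abs_summable[of m z] in \<open>simp only: T_def real_norm_def\<close>)
    show "(\<lambda>b. of_real (T b) * w^m) sums (of_real (besselJ_nat m z) * w^m)"
      unfolding T_def by (intro sums_mult2 sums_of_real sums_besselJ_nat)
  qed
  moreover have "of_real (T b) * w^m
      = ((of_real (z/2) * w)^(b+m) /\<^sub>R fact (b+m)) * ((- of_real (z/2) * inverse w)^b /\<^sub>R fact b)" for b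
    unfolding exp_series_product_term[OF assms] T_def by simp
  ultimately show ?thesis
    by simp
qed

lemma has_sum_exp_series_product_fiber:
  fixes z :: real and w :: complex
  assumes "w \<noteq> 0"
  shows "((\<lambda>(a, b). ((of_real (z/2) * w)^a /\<^sub>R fact a) * ((- of_real (z/2) * inverse w)^b /\<^sub>R fact b))
          has_sum of_real (besselJ n z) * w powi n) {(a, b). int a - int b = n}"
proof (cases "n \<ge> 0")
  case True
  then obtain m where n: "n = int m"
    by (metis nonneg_int_cases)
  have "bij_betw (\<lambda>b. (b + m, b)) UNIV {(a, b). int a - int b = n}"
    by (auto simp: bij_betw_def inj_on_def image_iff n)
  then show ?thesis
    using has_sum_exp_series_product_diagonal[OF assms, where z=z and m=m]
    by (simp add: n besselJ_def has_sum_reindex_bij_betw[symmetric])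
next
  case False
  then obtain m where n: "n = - int m" and "m > 0"
    by (metis neg_int_cases not_le)
  have "bij_betw (\<lambda>a. (a, a + m)) UNIV {(a, b). int a - int b = n}"
    by (auto simp: bij_betw_def inj_on_def image_iff n)
  (* On the fibres with a < b the two series swap roles: this is the diagonal sum for -z and 1/w. *)
  moreover have "((\<lambda>a. ((of_real (z/2) * w)^a /\<^sub>R fact a)
        * ((- of_real (z/2) * inverse w)^(a + m) /\<^sub>R fact (a + m)))
      has_sum of_real (besselJ_nat m (- z)) * (inverse w)^m) UNIV"
    using has_sum_exp_series_product_diagonal[where z="- z" and w="inverse w" and m=m] assms
    by (simp add: mult.commute)
  ultimately show ?thesis
    using \<open>m > 0\<close>
    by (simp add: n besselJ_def besselJ_nat_minus power_int_minus power_inverse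
        has_sum_reindex_bij_betw[symmetric])
qed

lemma besselJ_generating_function:
  fixes z :: real and w :: complex
  assumes "w \<noteq> 0"
  shows "((\<lambda>n. of_real (besselJ n z) * w powi n) has_sum exp (of_real (z/2) * (w - inverse w))) UNIV"
proof -
  define F where
    "F = (\<lambda>(a, b). ((of_real (z/2) * w)^a /\<^sub>R fact a) * ((- of_real (z/2) * inverse w)^b /\<^sub>R fact b))"
  define fiber where "fiber n = {(a, b). int a - int b = n}" for n
  have "(F has_sum exp (of_real (z/2) * w) * exp (- of_real (z/2) * inverse w)) UNIV"
    unfolding F_def by (intro has_sum_mult_abs_summable has_sum_exp_series exp_series_abs_summable_on)
  then have "(F has_sum exp (of_real (z/2) * (w - inverse w))) UNIV"
    by (simp add: right_diff_distrib flip: exp_add)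
  moreover have "bij_betw (\<lambda>p. (int (fst p) - int (snd p), p)) UNIV (Sigma UNIV fiber)"
    by (auto simp: bij_betw_def inj_on_def fiber_def image_iff)
  ultimately have "((\<lambda>q. F (snd q)) has_sum exp (of_real (z/2) * (w - inverse w))) (Sigma UNIV fiber)"
    by (simp add: has_sum_reindex_bij_betw[symmetric])
  then show ?thesis
    by (rule has_sum_Sigma') (use has_sum_exp_series_product_fiber[OF assms] in \<open>simp add: F_def fiber_def\<close>)
qed

lemma besselJ_abs_summable: "(\<lambda>n. \<bar>besselJ n z\<bar>) summable_on UNIV"
proof -
  have "(\<lambda>n. of_real (besselJ n z) :: complex) summable_on UNIV"
    using besselJ_generating_function[of 1 z] by (auto simp: summable_on_def)
  then have "(\<lambda>n. norm (of_real (besselJ n z) :: complex)) summable_on UNIV"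
    by (simp only: summable_on_iff_abs_summable_on_complex)
  then show ?thesis
    by simp
qed

lemma jacobi_anger:
  "((\<lambda>n. of_real (besselJ n z) * \<i> powi n * exp (\<i> * of_int n * of_real s))
      has_sum exp (\<i> * of_real (z * cos s))) UNIV"
proof -
  define w where "w = \<i> * exp (\<i> * of_real s)"
  have "inverse w = - \<i> * exp (- (\<i> * of_real s))"
    by (simp add: w_def exp_minus field_simps)
  then have exponent: "of_real (z/2) * (w - inverse w) = \<i> * of_real (z * cos s)"
    by (simp add: w_def cos_exp_eq[of "of_real s", unfolded cos_of_real] algebra_simps)
  have powers: "w powi n = \<i> powi n * exp (\<i> * of_int n * of_real s)" for n
    by (simp add: w_def power_int_mult_distrib exp_power_int mult_ac)
  have "w \<noteq> 0"
    by (simp add: w_def)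
  from besselJ_generating_function[OF this, of z] show ?thesis
    unfolding exponent powers by (simp only: mult.assoc)
qed

lemma Weierstrass_m_test_has_sum:
  fixes f :: "'i \<Rightarrow> 'a \<Rightarrow> 'b::banach" and B :: "'i \<Rightarrow> real"
  assumes "B summable_on UNIV"
    and bound: "\<And>n x. x \<in> S \<Longrightarrow> norm (f n x) \<le> B n"
    and sum: "\<And>x. x \<in> S \<Longrightarrow> ((\<lambda>n. f n x) has_sum g x) UNIV"
  shows "uniform_limit S (\<lambda>X x. \<Sum>n\<in>X. f n x) g (finite_subsets_at_top UNIV)"
proof (rule uniform_limitI)
  fix e :: real
  assume "e > 0"
  obtain SB where SB: "(B has_sum SB) UNIV"
    using assms(1) unfolding summable_on_def by blast
  have "\<forall>\<^sub>F X in finite_subsets_at_top UNIV. dist (sum B X) SB < e"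
    using SB \<open>e > 0\<close> unfolding has_sum_def by (rule tendstoD)
  moreover have "\<forall>\<^sub>F X in finite_subsets_at_top UNIV. finite X"
    by (rule eventually_finite_subsets_at_top_weakI) auto
  ultimately show "\<forall>\<^sub>F X in finite_subsets_at_top UNIV. \<forall>x\<in>S. dist (\<Sum>n\<in>X. f n x) (g x) < e"
  proof eventually_elim
    case (elim X)
    show ?case
    proof
      fix x
      assume x: "x \<in> S"
      have "norm (g x - (\<Sum>n\<in>X. f n x)) \<le> SB - sum B X"
      proof (rule norm_infsum_le)
        show "((\<lambda>n. f n x) has_sum g x - (\<Sum>n\<in>X. f n x)) (UNIV - X)"
          using has_sum_Diff[OF sum[OF x] has_sum_finite[OF elim(2)]] by simp
        show "(B has_sum SB - sum B X) (UNIV - X)"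
          using has_sum_Diff[OF SB has_sum_finite[OF elim(2)]] by simp
      qed (use bound x in auto)
      also have "\<dots> < e"
        using elim(1) by (simp add: dist_real_def)
      finally show "dist (\<Sum>n\<in>X. f n x) (g x) < e"
        by (simp add: dist_norm norm_minus_commute)
    qed
  qed
qed

lemma has_sum_integral_cbox:
  fixes f :: "'i \<Rightarrow> 'a::euclidean_space \<Rightarrow> 'b::banach" and B :: "'i \<Rightarrow> real"
  assumes "B summable_on UNIV"
    and "\<And>n x. x \<in> cbox a b \<Longrightarrow> norm (f n x) \<le> B n"
    and cont: "\<And>n. continuous_on (cbox a b) (f n)"
    and "\<And>x. x \<in> cbox a b \<Longrightarrow> ((\<lambda>n. f n x) has_sum g x) UNIV"
  shows "((\<lambda>n. integral (cbox a b) (f n)) has_sum integral (cbox a b) g) UNIV"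
proof -
  define F where "F = finite_subsets_at_top (UNIV :: 'i set)"
  have "uniform_limit (cbox a b) (\<lambda>X x. \<Sum>n\<in>X. f n x) g F"
    unfolding F_def using assms(1,2,4) by (rule Weierstrass_m_test_has_sum)
  moreover have "F \<noteq> bot"
    unfolding F_def by simp
  ultimately obtain I J where I: "\<And>X. ((\<lambda>x. \<Sum>n\<in>X. f n x) has_integral I X) (cbox a b)"
    and J: "(g has_integral J) (cbox a b)" and "(I \<longlongrightarrow> J) F"
    using uniform_limit_integral_cbox cont by (metis continuous_on_sum)
  have "I X = (\<Sum>n\<in>X. integral (cbox a b) (f n))" if "finite X" for X
  proof (rule has_integral_unique[OF I])
    show "((\<lambda>x. \<Sum>n\<in>X. f n x) has_integral (\<Sum>n\<in>X. integral (cbox a b) (f n))) (cbox a b)"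
      using that cont by (intro has_integral_sum) (auto intro: integrable_continuous)
  qed
  then have "\<forall>\<^sub>F X in F. I X = (\<Sum>n\<in>X. integral (cbox a b) (f n))"
    unfolding F_def by (intro eventually_finite_subsets_at_top_weakI) auto
  with \<open>(I \<longlongrightarrow> J) F\<close> have "((\<lambda>X. \<Sum>n\<in>X. integral (cbox a b) (f n)) \<longlongrightarrow> J) F"
    by (rule tendsto_cong[THEN iffD1, rotated])
  then show ?thesis
    using J unfolding has_sum_def F_def by (simp add: integral_unique)
qed

lemma has_integral_exp_int_period:
  "((\<lambda>t. exp (t *\<^sub>R (\<i> * of_int k))) has_integral (if k = 0 then 2 * of_real pi else 0)) {0..2*pi}"
proof (cases "k = 0")
  case True
  then show ?thesis
    using has_integral_const_real[of "1::complex" 0 "2*pi"] by (simp add: scaleR_conv_of_real)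
next
  case False
  define A where "A = \<i> * of_int k"
  have "A \<noteq> 0"
    using False by (simp add: A_def)
  have "exp ((2*pi) *\<^sub>R A) = 1"
    using exp_integer_2pi[of "of_int k"] by (simp add: A_def scaleR_conv_of_real mult_ac)
  then have "((\<lambda>t. exp (t *\<^sub>R A) * A) has_integral 0) {0..2*pi}"
    using fundamental_theorem_of_calculus[of 0 "2*pi" "\<lambda>t. exp (t *\<^sub>R A)" "\<lambda>t. exp (t *\<^sub>R A) * A"]
    by (auto intro: exp_scaleR_has_vector_derivative_right)
  then have "((\<lambda>t. exp (t *\<^sub>R A) * A * inverse A) has_integral 0 * inverse A) {0..2*pi}"
    by (rule has_integral_mult_left)
  then have "((\<lambda>t. exp (t *\<^sub>R A)) has_integral 0) {0..2*pi}"
    using \<open>A \<noteq> 0\<close> by (simp add: mult.assoc)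
  then show ?thesis
    using False by (simp add: A_def)
qed

definition bessel_integrand :: "int \<Rightarrow> real \<Rightarrow> real \<Rightarrow> complex" where
  "bessel_integrand p z t = exp (t *\<^sub>R (\<i> * of_int p)) * exp (\<i> * of_real (z * cos t))"

lemma norm_bessel_integrand [simp]: "norm (bessel_integrand p z t) = 1"
  by (simp add: bessel_integrand_def norm_mult scaleR_conv_of_real)

lemma continuous_on_bessel_integrand: "continuous_on A (bessel_integrand p z)"
  unfolding bessel_integrand_def by (intro continuous_intros)

lemma integral_bessel_integrand:
  "integral {0..2*pi} (bessel_integrand p z) = 2 * of_real pi * \<i> powi p * of_real (besselJ p z)"
proof -
  define f where "f n t = of_real (besselJ n z) * \<i> powi n * exp (t *\<^sub>R (\<i> * of_int (n + p)))" for n t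
  have "exp (t *\<^sub>R (\<i> * of_int p)) * (of_real (besselJ n z) * \<i> powi n * exp (\<i> * of_int n * of_real t))
      = f n t" for n t
    by (simp add: f_def exp_add[symmetric] scaleR_conv_of_real algebra_simps)
  then have "((\<lambda>n. f n t) has_sum bessel_integrand p z t) UNIV" for t
    using has_sum_cmult_right[OF jacobi_anger, of "exp (t *\<^sub>R (\<i> * of_int p))" z t]
    by (simp add: bessel_integrand_def)
  then have "((\<lambda>n. integral {0..2*pi} (f n)) has_sum integral {0..2*pi} (bessel_integrand p z)) UNIV"
    unfolding cbox_interval[symmetric]
    by (intro has_sum_integral_cbox[OF besselJ_abs_summable[of z]])
      (auto simp: f_def norm_mult norm_power_int scaleR_conv_of_real intro!: continuous_intros)
  moreover define c where "c = 2 * of_real pi * (of_real (besselJ (- p) z) * \<i> powi (- p))"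
  have "integral {0..2*pi} (f n) = (if n = - p then c else 0)" for n
  proof -
    have "(f n has_integral of_real (besselJ n z) * \<i> powi n * (if n + p = 0 then 2 * of_real pi else 0))
        {0..2*pi}"
      unfolding f_def by (rule has_integral_mult_right[OF has_integral_exp_int_period])
    moreover have "n + p = 0 \<longleftrightarrow> n = - p"
      by auto
    ultimately show ?thesis
      by (auto simp: c_def integral_unique mult_ac)
  qed
  ultimately have "((\<lambda>n. if n = - p then c else 0) has_sum integral {0..2*pi} (bessel_integrand p z)) UNIV"
    by simp
  moreover have "((\<lambda>n. if n = - p then c else 0) has_sum c) UNIV"
    by (rule has_sum_finite_neutralI[of "{- p}"]) auto
  ultimately have "integral {0..2*pi} (bessel_integrand p z) = c"
    by (rule has_sum_unique)
  then show ?thesis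
    unfolding c_def besselJ_neg_order_times_i_powi by (simp add: mult_ac)
qed

lemma integral_lborel_prod_Basis:
  fixes f :: "'a::euclidean_space \<Rightarrow> real \<Rightarrow> 'b::{real_normed_field, second_countable_topology, banach}"
  assumes int: "\<And>i. i \<in> Basis \<Longrightarrow> integrable lborel (f i)"
  shows "integrable lborel (\<lambda>x. \<Prod>i\<in>Basis. f i (x \<bullet> i))"
    and "(LINT x|lborel. (\<Prod>i\<in>Basis. f i (x \<bullet> i))) = (\<Prod>i\<in>Basis. LINT t|lborel. f i t)"
proof -
  interpret product_sigma_finite "\<lambda>_::'a. lborel::real measure"
    by (simp add: product_sigma_finite_def lborel.sigma_finite_measure_axioms)
  define T where "T g = (\<Sum>i\<in>Basis. g i *\<^sub>R i)" for g :: "'a \<Rightarrow> real"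
  have T: "T \<in> measurable (\<Pi>\<^sub>M i\<in>Basis. lborel) borel"
    unfolding T_def by measurable
  have lborel: "(lborel::'a measure) = distr (\<Pi>\<^sub>M i\<in>Basis. lborel) borel T"
    unfolding T_def by (rule lborel_eq)
  have [measurable]: "f i \<in> borel_measurable borel" if "i \<in> Basis" for i
    using int[OF that] by (simp add: borel_measurable_integrable)
  have meas: "(\<lambda>x. \<Prod>i\<in>Basis. f i (x \<bullet> i)) \<in> borel_measurable borel"
    by measurable
  have coords: "(\<Prod>i\<in>Basis. f i (T g \<bullet> i)) = (\<Prod>i\<in>Basis. f i (g i))" for g
    unfolding T_def by (intro prod.cong) (simp_all add: inner_sum_left inner_Basis if_distrib sum.delta cong: if_cong)
  have "integrable (\<Pi>\<^sub>M i\<in>Basis. lborel) (\<lambda>g. \<Prod>i\<in>Basis. f i (g i))"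
    using int by (intro product_integrable_prod) auto
  then show "integrable lborel (\<lambda>x. \<Prod>i\<in>Basis. f i (x \<bullet> i))"
    unfolding lborel by (simp add: integrable_distr_eq[OF T meas] coords)
  have "(LINT x|lborel. (\<Prod>i\<in>Basis. f i (x \<bullet> i)))
      = (LINT g|(\<Pi>\<^sub>M i\<in>Basis. lborel). (\<Prod>i\<in>Basis. f i (T g \<bullet> i)))"
    unfolding lborel by (rule integral_distr[OF T meas])
  also have "\<dots> = (LINT g|(\<Pi>\<^sub>M i\<in>Basis. lborel). (\<Prod>i\<in>Basis. f i (g i)))"
    by (simp add: coords)
  also have "\<dots> = (\<Prod>i\<in>Basis. LINT t|lborel. f i t)"
    using int by (intro product_integral_prod) auto
  finally show "(LINT x|lborel. (\<Prod>i\<in>Basis. f i (x \<bullet> i))) = (\<Prod>i\<in>Basis. LINT t|lborel. f i t)" .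
qed

lemma integral_cbox_prod_Basis:
  fixes g :: "'a::euclidean_space \<Rightarrow> real \<Rightarrow> complex"
  assumes cont: "\<And>i. i \<in> Basis \<Longrightarrow> continuous_on {a \<bullet> i..b \<bullet> i} (g i)"
  shows "integral (cbox a b) (\<lambda>x. \<Prod>i\<in>Basis. g i (x \<bullet> i)) = (\<Prod>i\<in>Basis. integral {a \<bullet> i..b \<bullet> i} (g i))"
proof -
  have set_int: "set_integrable lborel {a \<bullet> i..b \<bullet> i} (g i)" if "i \<in> Basis" for i
    using cont[OF that] by (rule borel_integrable_atLeastAtMost')
  have "(\<Prod>i\<in>Basis. indicator {a \<bullet> i..b \<bullet> i} (x \<bullet> i) *\<^sub>R g i (x \<bullet> i))
      = indicator (cbox a b) x *\<^sub>R (\<Prod>i\<in>Basis. g i (x \<bullet> i))" for x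
    by (auto simp: indicator_def mem_box intro!: prod_zero)
  then have "set_integrable lborel (cbox a b) (\<lambda>x. \<Prod>i\<in>Basis. g i (x \<bullet> i))"
    and "(LINT x:cbox a b|lborel. (\<Prod>i\<in>Basis. g i (x \<bullet> i)))
         = (\<Prod>i\<in>Basis. LINT t:{a \<bullet> i..b \<bullet> i}|lborel. g i t)"
    using integral_lborel_prod_Basis[of "\<lambda>i t. indicator {a \<bullet> i..b \<bullet> i} t *\<^sub>R g i t"] set_int
    by (simp_all add: set_integrable_def set_lebesgue_integral_def)
  then show ?thesis
    using set_int by (simp add: set_borel_integral_eq_integral)
qed

lemma integral_cbox_prod_cart:
  fixes g :: "'n::finite \<Rightarrow> real \<Rightarrow> complex" and a b :: "real^'n"
  assumes "\<And>l. continuous_on {a $ l..b $ l} (g l)"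
  shows "integral (cbox a b) (\<lambda>x. \<Prod>l\<in>UNIV. g l (x $ l)) = (\<Prod>l\<in>UNIV. integral {a $ l..b $ l} (g l))"
proof -
  let ?e = "\<lambda>l::'n. axis l (1::real)"
  have inj: "inj ?e"
    by (auto simp: inj_def axis_eq_axis)
  have Basis: "Basis = range ?e"
    by (auto simp: Basis_vec_def)
  have reindex: "(\<Prod>i\<in>Basis. h i) = (\<Prod>l\<in>UNIV. h (?e l))" for h :: "real^'n \<Rightarrow> complex"
    unfolding Basis prod.reindex[OF inj] by simp
  have "continuous_on {a \<bullet> i..b \<bullet> i} (g (inv ?e i))" if "i \<in> Basis" for i
    using that assms by (auto simp: Basis inv_f_f[OF inj] inner_axis)
  then have "integral (cbox a b) (\<lambda>x. \<Prod>i\<in>Basis. g (inv ?e i) (x \<bullet> i))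
      = (\<Prod>i\<in>Basis. integral {a \<bullet> i..b \<bullet> i} (g (inv ?e i)))"
    by (rule integral_cbox_prod_Basis)
  then show ?thesis
    by (simp add: reindex inv_f_f[OF inj] inner_axis)
qed

lemma exp_Theta_has_sum:
  fixes k :: "'n::finite \<Rightarrow> int" and \<theta> :: "real^'n"
  shows "((\<lambda>m. of_real (besselJ m (2 * x * (\<Prod>l\<in>UNIV. y l))) * \<i> powi m * exp (\<i> * of_int m * of_real \<phi>)
            * (\<Prod>l\<in>UNIV. bessel_integrand (k l + m) (2 * x / y l) (\<theta> $ l)))
          has_sum exp (\<i> * of_real (Theta k \<theta> y x \<phi>))) UNIV"
proof -
  define s where "s = (\<Sum>l\<in>UNIV. \<theta> $ l) + \<phi>"
  define E where "E = (\<Prod>l\<in>UNIV. exp (\<i> * of_real (of_int (k l) * \<theta> $ l + 2 * x / y l * cos (\<theta> $ l))))"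
  have Theta: "exp (\<i> * of_real (Theta k \<theta> y x \<phi>)) = exp (\<i> * of_real (2 * x * (\<Prod>l\<in>UNIV. y l) * cos s)) * E"
    by (simp add: Theta_def s_def E_def distrib_left exp_add exp_sum sum_distrib_left)
  have summand: "exp (\<i> * of_int m * of_real s) * E
      = exp (\<i> * of_int m * of_real \<phi>) * (\<Prod>l\<in>UNIV. bessel_integrand (k l + m) (2 * x / y l) (\<theta> $ l))" for m
  proof -
    have "exp (\<i> * of_int m * of_real s)
        = exp (\<i> * of_int m * of_real \<phi>) * (\<Prod>l\<in>UNIV. exp (\<i> * of_int m * of_real (\<theta> $ l)))"
      by (simp add: s_def distrib_left exp_add exp_sum sum_distrib_left)
    moreover have "(\<Prod>l\<in>UNIV. exp (\<i> * of_int m * of_real (\<theta> $ l))) * E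
        = (\<Prod>l\<in>UNIV. bessel_integrand (k l + m) (2 * x / y l) (\<theta> $ l))"
      unfolding E_def bessel_integrand_def prod.distrib[symmetric]
      by (intro prod.cong refl) (simp add: exp_add[symmetric] scaleR_conv_of_real algebra_simps)
    ultimately show ?thesis
      by (simp only: mult.assoc)
  qed
  have "((\<lambda>m. of_real (besselJ m (2 * x * (\<Prod>l\<in>UNIV. y l))) * \<i> powi m * exp (\<i> * of_int m * of_real s) * E)
      has_sum exp (\<i> * of_real (2 * x * (\<Prod>l\<in>UNIV. y l) * cos s)) * E) UNIV"
    by (rule has_sum_cmult_left[OF jacobi_anger])
  then show ?thesis
    unfolding Theta mult.assoc[of _ "exp _" E] summand by (simp only: mult.assoc)
qed

lemma Jk_has_sum:
  fixes k :: "'n::finite \<Rightarrow> int"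
  shows "((\<lambda>m. of_real (besselJ m (2 * x * (\<Prod>l\<in>UNIV. y l))) * \<i> powi m * exp (\<i> * of_int m * of_real \<phi>)
            * (\<Prod>l\<in>UNIV. 2 * of_real pi * \<i> powi (k l + m) * of_real (besselJ (k l + m) (2 * x / y l))))
          has_sum Jk k y x \<phi>) UNIV"
proof -
  define c where "c m = of_real (besselJ m (2 * x * (\<Prod>l\<in>UNIV. y l))) * \<i> powi m * exp (\<i> * of_int m * of_real \<phi>)"
    for m
  define f where "f m \<theta> = c m * (\<Prod>l\<in>UNIV. bessel_integrand (k l + m) (2 * x / y l) (\<theta> $ l))"
    for m and \<theta> :: "real^'n"
  have "((\<lambda>m. integral (cbox 0 (\<chi> l. 2 * pi)) (f m)) has_sum Jk k y x \<phi>) UNIV"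
    unfolding Jk_def
  proof (rule has_sum_integral_cbox[OF besselJ_abs_summable])
    show "norm (f m \<theta>) \<le> \<bar>besselJ m (2 * x * (\<Prod>l\<in>UNIV. y l))\<bar>" for m \<theta>
      by (simp add: f_def c_def norm_mult norm_power_int flip: prod_norm)
    show "continuous_on (cbox 0 (\<chi> l. 2 * pi)) (f m)" for m
      unfolding f_def bessel_integrand_def by (intro continuous_intros)
    show "((\<lambda>m. f m \<theta>) has_sum exp (\<i> * of_real (Theta k \<theta> y x \<phi>))) UNIV" for \<theta>
      unfolding f_def c_def by (rule exp_Theta_has_sum)
  qed
  moreover have "integral (cbox 0 (\<chi> l. 2 * pi)) (f m)
      = c m * (\<Prod>l\<in>UNIV. 2 * of_real pi * \<i> powi (k l + m) * of_real (besselJ (k l + m) (2 * x / y l)))" for m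
    unfolding f_def integral_mult_right
    by (subst integral_cbox_prod_cart) (simp_all add: continuous_on_bessel_integrand integral_bessel_integrand)
  ultimately show ?thesis
    by (simp add: c_def)
qed

theorem lemma6p13:
  fixes k :: "'n::finite \<Rightarrow> int" and y :: "'n \<Rightarrow> real" and x \<phi> :: real
  assumes "x > 0" and "\<And>l. y l > 0"
  shows "(\<lambda>m::int. norm (exp (\<i> * of_int m * complex_of_real \<phi>) * jfun0 m (x * (\<Prod>l\<in>UNIV. y l))
            * (\<Prod>l\<in>UNIV. jfun0 (k l + m) (x / y l)))) summable_on UNIV
       \<and> ((\<lambda>m::int. exp (\<i> * of_int m * complex_of_real \<phi>) * jfun0 m (x * (\<Prod>l\<in>UNIV. y l))
            * (\<Prod>l\<in>UNIV. jfun0 (k l + m) (x / y l)))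
          has_sum (2 * complex_of_real pi * Jk k y (2 * pi * x) \<phi>)) UNIV"
proof -
  let ?T = "\<lambda>m::int. exp (\<i> * of_int m * complex_of_real \<phi>) * jfun0 m (x * (\<Prod>l\<in>UNIV. y l))
            * (\<Prod>l\<in>UNIV. jfun0 (k l + m) (x / y l))"
  have args: "4 * pi * (x * (\<Prod>l\<in>UNIV. y l)) = 2 * (2 * pi * x) * (\<Prod>l\<in>UNIV. y l)"
    "4 * pi * (x / y l) = 2 * (2 * pi * x) / y l" for l
    by simp_all
  have T: "?T = (\<lambda>m. 2 * of_real pi *
      (of_real (besselJ m (2 * (2 * pi * x) * (\<Prod>l\<in>UNIV. y l))) * \<i> powi m * exp (\<i> * of_int m * of_real \<phi>)
       * (\<Prod>l\<in>UNIV. 2 * of_real pi * \<i> powi (k l + m) * of_real (besselJ (k l + m) (2 * (2 * pi * x) / y l)))))"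
    unfolding jfun0_def args by (simp only: mult_ac)
  have sum: "(?T has_sum 2 * of_real pi * Jk k y (2 * pi * x) \<phi>) UNIV"
    unfolding T by (rule has_sum_cmult_right[OF Jk_has_sum])
  then have "?T summable_on UNIV"
    by (rule has_sum_imp_summable)
  then have "(\<lambda>m. norm (?T m)) summable_on UNIV"
    by (simp only: summable_on_iff_abs_summable_on_complex)
  with sum show ?thesis
    by (intro conjI)
qed

end
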